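(* Let $n\ge1$, $N=\{1,\dots,n\}$, $A=[0,1]$, and let $f:A^n\to A$ be a mechanism. Then $f$ is an order statistic mechanism if and only if $f$ is both an OWA mechanism and a generalized median voter scheme (GMVS).
   Context: A mechanism is a map $f:A^n\to A$ from profiles $x=(x_i)_{i\in N}$ of reported locations to a facility location. An OWA mechanism has weights $w_1,\dots,w_n\in[0,1]$ with $\sum_j w_j=1$ and returns $f(x)=\sum_{j=1}^n w_j x_{\pi(j)}$, where $\pi$ is a permutation of $N$ with $x_{\pi(1)}\le\dots\le x_{\pi(n)}$. An order statistic mechanism is one for which there is a fixed $j\in\{1,\dots,n\}$ with $f(x)=x_{\pi(j)}$ (the $j$-th smallest report) for all $x$, i.e., an OWA with $w_j=1$. $f$ is a GMVS if there are parameters $\alpha_S\in A$, one for each nonempty $S\subseteq N$, such that for all $x\in A^n$, $f(x)=\min_{\emptyset\ne S\subseteq N}\max\big(\{x_i: i\in S\}\cup\{\alpha_S\}\big)$. *)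

theory Defs
  imports Complex_Main
begin

text \<open>Agents are N = {0..<n} (0-indexed). A profile is x :: nat => real; only the
values x i for i < n matter. The domain A^n with A = [0,1] is the set of profiles
with x i in [0,1] for all i < n.\<close>

definition profiles :: "nat \<Rightarrow> (nat \<Rightarrow> real) set" where
  "profiles n = {x. \<forall>i<n. x i \<in> {0..1}}"

definition mechanism :: "nat \<Rightarrow> ((nat \<Rightarrow> real) \<Rightarrow> real) \<Rightarrow> bool" where
  "mechanism n f \<longleftrightarrow> (\<forall>x\<in>profiles n. f x \<in> {0..1})"

text \<open>The (j+1)-th smallest report, j < n, i.e. x_{pi(j+1)} in the paper's 1-indexed notation.\<close>
definition kth_smallest :: "nat \<Rightarrow> (nat \<Rightarrow> real) \<Rightarrow> nat \<Rightarrow> real" where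
  "kth_smallest n x j = sort (map x [0..<n]) ! j"

definition owa_mechanism :: "nat \<Rightarrow> ((nat \<Rightarrow> real) \<Rightarrow> real) \<Rightarrow> bool" where
  "owa_mechanism n f \<longleftrightarrow>
     (\<exists>w :: nat \<Rightarrow> real. (\<forall>j<n. w j \<in> {0..1}) \<and> (\<Sum>j<n. w j) = 1 \<and>
        (\<forall>x\<in>profiles n. f x = (\<Sum>j<n. w j * kth_smallest n x j)))"

definition order_statistic_mechanism :: "nat \<Rightarrow> ((nat \<Rightarrow> real) \<Rightarrow> real) \<Rightarrow> bool" where
  "order_statistic_mechanism n f \<longleftrightarrow>
     (\<exists>j<n. \<forall>x\<in>profiles n. f x = kth_smallest n x j)"

definition gmvs :: "nat \<Rightarrow> ((nat \<Rightarrow> real) \<Rightarrow> real) \<Rightarrow> bool" where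
  "gmvs n f \<longleftrightarrow>
     (\<exists>\<alpha> :: nat set \<Rightarrow> real.
        (\<forall>S. S \<subseteq> {..<n} \<and> S \<noteq> {} \<longrightarrow> \<alpha> S \<in> {0..1}) \<and>
        (\<forall>x\<in>profiles n.
           f x = Min ((\<lambda>S. max (Max (x ` S)) (\<alpha> S)) ` {S. S \<subseteq> {..<n} \<and> S \<noteq> {}})))"

end

theory Submission
  imports Defs "HOL-Library.Multiset"
begin

text \<open>The order statistic \<open>kth_smallest n x j\<close> (counted from 0) is the OWA mechanism
whose weight vector is the j-th unit vector, and it is the GMVS with \<open>\<alpha>\<^sub>S = 0\<close> for
\<open>|S| > j\<close> and \<open>\<alpha>\<^sub>S = 1\<close> otherwise: every set of more than j agents contains a report at
least the order statistic, and the agents reporting at most it form such a set.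

Conversely, a GMVS always outputs either a report or one of its finitely many parameters.
An OWA mechanism with weights w sends the profile in which k agents report t and the others
report 0 to \<open>t W\<^sub>k\<close>, where \<open>W\<^sub>k\<close> is the sum of the k last weights. If \<open>0 < W\<^sub>k < 1\<close>,
then for all but finitely many t the value \<open>t W\<^sub>k\<close> is neither a report nor a parameter.
Hence every \<open>W\<^sub>k\<close> is 0 or 1, so the weights are 0 or 1, and as they sum to 1 exactly one
of them is 1.\<close>

lemma sorted_length_filter_less_nth:
  fixes xs :: "'a::linorder list"
  assumes "sorted xs" "j < length xs"
  shows "length (filter (\<lambda>v. v < xs ! j) xs) \<le> j"
proof -
  have "{i. i < length xs \<and> xs ! i < xs ! j} \<subseteq> {..<j}"
    using assms by (auto simp: not_less dest: sorted_nth_mono[of xs j])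
  then have "card {i. i < length xs \<and> xs ! i < xs ! j} \<le> j"
    using card_mono[of "{..<j}"] by fastforce
  then show ?thesis by (simp add: length_filter_conv_card)
qed

lemma sorted_length_filter_le_nth:
  fixes xs :: "'a::linorder list"
  assumes "sorted xs" "j < length xs"
  shows "Suc j \<le> length (filter (\<lambda>v. v \<le> xs ! j) xs)"
proof -
  have "{..j} \<subseteq> {i. i < length xs \<and> xs ! i \<le> xs ! j}"
    using assms by (auto intro: sorted_nth_mono)
  then have "Suc j \<le> card {i. i < length xs \<and> xs ! i \<le> xs ! j}"
    using card_mono[of "{i. i < length xs \<and> xs ! i \<le> xs ! j}" "{..j}"] by fastforce
  then show ?thesis by (simp add: length_filter_conv_card)
qed

lemma length_filter_sort_map_upt:
  "length (filter P (sort (map x [0..<n]))) = card {i. i < n \<and> P (x i)}"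
proof -
  have "{i. i < n \<and> P (map x [0..<n] ! i)} = {i. i < n \<and> P (x i)}" by auto
  then show ?thesis by (simp add: filter_sort length_filter_conv_card)
qed

lemma card_less_kth_smallest:
  assumes "j < n"
  shows "card {i. i < n \<and> x i < kth_smallest n x j} \<le> j"
  using sorted_length_filter_less_nth[of "sort (map x [0..<n])" j] assms
  by (simp add: kth_smallest_def length_filter_sort_map_upt)

lemma card_le_kth_smallest:
  assumes "j < n"
  shows "Suc j \<le> card {i. i < n \<and> x i \<le> kth_smallest n x j}"
  using sorted_length_filter_le_nth[of "sort (map x [0..<n])" j] assms
  by (simp add: kth_smallest_def length_filter_sort_map_upt)

lemma kth_smallest_in_unit_interval:
  assumes "x \<in> profiles n" "j < n"
  shows "kth_smallest n x j \<in> {0..1}"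
proof -
  have "kth_smallest n x j \<in> set (sort (map x [0..<n]))"
    unfolding kth_smallest_def using assms(2) by (intro nth_mem) simp
  then show ?thesis using assms(1) by (auto simp: profiles_def)
qed

lemma kth_smallest_le_Max:
  assumes "S \<subseteq> {..<n}" "j < card S"
  shows "kth_smallest n x j \<le> Max (x ` S)"
proof -
  have finite_S: "finite S" using assms(1) finite_subset by blast
  have "j < n" using assms card_mono[OF _ assms(1)] by fastforce
  have "\<not> S \<subseteq> {i. i < n \<and> x i < kth_smallest n x j}"
  proof
    assume "S \<subseteq> {i. i < n \<and> x i < kth_smallest n x j}"
    then have "card S \<le> card {i. i < n \<and> x i < kth_smallest n x j}"
      by (intro card_mono) auto
    with card_less_kth_smallest[OF \<open>j < n\<close>, of x] assms(2) show False by simp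
  qed
  then obtain i where "i \<in> S" "kth_smallest n x j \<le> x i" using assms(1) by fastforce
  then show ?thesis using finite_S by (auto intro: order_trans[OF _ Max_ge])
qed

lemma order_statistic_mechanism_imp_gmvs:
  assumes "order_statistic_mechanism n f"
  shows "gmvs n f"
proof -
  obtain j where "j < n" and f: "\<forall>x\<in>profiles n. f x = kth_smallest n x j"
    using assms unfolding order_statistic_mechanism_def by blast
  define \<alpha> where "\<alpha> S = (if j < card S then 0 else 1 :: real)" for S :: "nat set"
  let ?C = "{S. S \<subseteq> {..<n} \<and> S \<noteq> {}}"
  let ?g = "\<lambda>x S. max (Max (x ` S)) (\<alpha> S)"
  have finite_C: "finite ?C" by (rule finite_subset[of _ "Pow {..<n}"]) auto
  have "kth_smallest n x j = Min (?g x ` ?C)" if "x \<in> profiles n" for x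
  proof -
    let ?k = "kth_smallest n x j"
    have k01: "?k \<in> {0..1}" using kth_smallest_in_unit_interval[OF that \<open>j < n\<close>] .
    define T where "T = {i. i < n \<and> x i \<le> ?k}"
    have card_T: "j < card T"
      using card_le_kth_smallest[OF \<open>j < n\<close>, of x] by (simp add: T_def Suc_le_eq)
    then have "T \<noteq> {}" by auto
    then have T: "T \<in> ?C" by (auto simp: T_def)
    have "Max (x ` T) \<le> ?k" using T by (auto simp: T_def)
    then have "?g x T \<le> ?k" using card_T k01 by (simp add: \<alpha>_def)
    moreover have "?k \<le> ?g x S" if "S \<in> ?C" for S
      using that k01 kth_smallest_le_Max[of S n j x] by (auto simp: \<alpha>_def le_max_iff_disj)
    ultimately show ?thesis
      using finite_C T by (intro antisym Min.boundedI Min.coboundedI[THEN order_trans]) auto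
  qed
  moreover have "\<forall>S. S \<subseteq> {..<n} \<and> S \<noteq> {} \<longrightarrow> \<alpha> S \<in> {0..1}" by (simp add: \<alpha>_def)
  ultimately show ?thesis using f unfolding gmvs_def by auto
qed

lemma order_statistic_mechanism_imp_owa:
  assumes "order_statistic_mechanism n f"
  shows "owa_mechanism n f"
proof -
  obtain j where "j < n" and "\<forall>x\<in>profiles n. f x = kth_smallest n x j"
    using assms unfolding order_statistic_mechanism_def by blast
  then show ?thesis unfolding owa_mechanism_def
    by (intro exI[of _ "\<lambda>l. of_bool (l = j)"]) simp
qed

lemma gmvs_value_report_or_parameter:
  assumes "gmvs n f" "1 \<le> n"
  obtains F where "finite F" "\<And>x. x \<in> profiles n \<Longrightarrow> f x \<in> x ` {..<n} \<union> F"
proof -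
  let ?C = "{S. S \<subseteq> {..<n} \<and> S \<noteq> {}}"
  obtain \<alpha> where f: "\<forall>x\<in>profiles n. f x = Min ((\<lambda>S. max (Max (x ` S)) (\<alpha> S)) ` ?C)"
    using assms unfolding gmvs_def by blast
  let ?g = "\<lambda>x S. max (Max (x ` S)) (\<alpha> S)"
  have finite_C: "finite ?C" by (rule finite_subset[of _ "Pow {..<n}"]) auto
  have "{0} \<in> ?C" using assms(2) by auto
  have "f x \<in> x ` {..<n} \<union> \<alpha> ` Pow {..<n}" if "x \<in> profiles n" for x
  proof -
    have "f x = Min (?g x ` ?C)" using f that by blast
    moreover have "Min (?g x ` ?C) \<in> ?g x ` ?C"
      using finite_C \<open>{0} \<in> ?C\<close> by (intro Min_in) auto
    ultimately obtain S where S: "S \<in> ?C" "f x = ?g x S" by auto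
    then have "Max (x ` S) \<in> x ` S" by (intro Max_in) (auto intro: finite_subset)
    then show ?thesis using S by (auto simp: max_def)
  qed
  then show ?thesis using that[of "\<alpha> ` Pow {..<n}"] by auto
qed

definition step_profile :: "nat \<Rightarrow> real \<Rightarrow> nat \<Rightarrow> real" where
  "step_profile k t i = (if i < k then t else 0)"

lemma step_profile_in_profiles: "t \<in> {0..1} \<Longrightarrow> step_profile k t \<in> profiles n"
  by (auto simp: step_profile_def profiles_def)

lemma kth_smallest_step_profile:
  assumes "k \<le> n" "j < n" "0 \<le> t"
  shows "kth_smallest n (step_profile k t) j = (if j < n - k then 0 else t)"
proof -
  have reports: "map (step_profile k t) [0..<n] = replicate k t @ replicate (n - k) 0"
    using assms(1) by (intro nth_equalityI) (auto simp: step_profile_def nth_append)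
  have "sort (map (step_profile k t) [0..<n]) = replicate (n - k) 0 @ replicate k t"
  proof (rule properties_for_sort)
    show "mset (replicate (n - k) 0 @ replicate k t) = mset (map (step_profile k t) [0..<n])"
      unfolding reports by (simp add: add.commute)
    show "sorted (replicate (n - k) 0 @ replicate k t)"
      using assms(3) by (auto simp: sorted_append)
  qed
  then show ?thesis unfolding kth_smallest_def using assms by (auto simp: nth_append)
qed

lemma owa_step_profile:
  assumes owa: "\<forall>x\<in>profiles n. f x = (\<Sum>j<n. w j * kth_smallest n x j)"
    and "k \<le> n" "t \<in> {0..1}"
  shows "f (step_profile k t) = t * (\<Sum>j\<in>{n-k..<n}. w j)"
proof -
  have "f (step_profile k t) = (\<Sum>j<n. w j * (if j < n - k then 0 else t))"
    using owa step_profile_in_profiles[OF assms(3)] kth_smallest_step_profile[OF assms(2)]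
      assms(3) by simp
  also have "\<dots> = (\<Sum>j<n. if n - k \<le> j then t * w j else 0)"
    by (rule sum.cong) auto
  also have "\<dots> = (\<Sum>j\<in>{j\<in>{..<n}. n - k \<le> j}. t * w j)"
    by (rule sum.inter_filter[symmetric]) simp
  also have "{j\<in>{..<n}. n - k \<le> j} = {n-k..<n}" by auto
  finally show ?thesis by (simp add: sum_distrib_left)
qed

lemma ex_scaled_notin_finite:
  fixes F :: "real set"
  assumes "finite F" "c \<noteq> 0"
  obtains t where "0 < t" "t \<le> 1" "t * c \<notin> F"
proof -
  have "\<not> {0<..1} \<subseteq> (\<lambda>y. y / c) ` F"
    using assms(1) infinite_super by (metis finite_imageI infinite_Ioc_iff zero_less_one)
  then obtain t where t: "t \<in> {0<..1}" "t \<notin> (\<lambda>y. y / c) ` F" by blast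
  have "t * c \<notin> F"
  proof
    assume "t * c \<in> F"
    then have "t * c / c \<in> (\<lambda>y. y / c) ` F" by blast
    then show False using t(2) assms(2) by simp
  qed
  then show ?thesis using that[of t] t(1) by simp
qed

lemma unit_vector_of_01_weights:
  fixes w :: "nat \<Rightarrow> real"
  assumes "\<forall>i<n. w i \<in> {0, 1}" "(\<Sum>i<n. w i) = 1"
  obtains j where "j < n" "\<And>i. i < n \<Longrightarrow> w i = of_bool (i = j)"
proof -
  have "\<exists>j<n. w j = 1"
  proof (rule ccontr)
    assume "\<not> (\<exists>j<n. w j = 1)"
    then have "\<forall>j<n. w j = 0" using assms(1) by auto
    then show False using assms(2) by simp
  qed
  then obtain j where j: "j < n" "w j = 1" by blast
  have "(\<Sum>i\<in>{..<n} - {j}. w i) = 0"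
    using assms(2) sum.remove[of "{..<n}" j w] j by simp
  then have "\<forall>i\<in>{..<n} - {j}. w i = 0"
    by (subst (asm) sum_nonneg_eq_0_iff) (use assms(1) in auto)
  then show ?thesis using that j by force
qed

context
  fixes n :: nat and f :: "(nat \<Rightarrow> real) \<Rightarrow> real" and w :: "nat \<Rightarrow> real" and F :: "real set"
  assumes weights_01: "\<forall>j<n. w j \<in> {0..1}" and weights_sum: "(\<Sum>j<n. w j) = 1"
    and owa: "\<forall>x\<in>profiles n. f x = (\<Sum>j<n. w j * kth_smallest n x j)"
    and finite_F: "finite F"
    and report_or_F: "\<And>x. x \<in> profiles n \<Longrightarrow> f x \<in> x ` {..<n} \<union> F"
begin

lemma tail_weight_0_or_1:
  assumes "k \<le> n"
  shows "(\<Sum>j\<in>{n-k..<n}. w j) \<in> {0, 1}"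
proof (rule ccontr)
  let ?W = "\<Sum>j\<in>{n-k..<n}. w j"
  assume "?W \<notin> {0, 1}"
  moreover have "?W \<le> (\<Sum>j<n. w j)" using weights_01 by (intro sum_mono2) auto
  moreover have "0 \<le> ?W" using weights_01 by (intro sum_nonneg) auto
  ultimately have W: "0 < ?W" "?W < 1" using weights_sum by auto
  obtain t where t: "0 < t" "t \<le> 1" "t * ?W \<notin> F"
    by (rule ex_scaled_notin_finite[OF finite_F]) (use W in auto)
  have "t \<in> {0..1}" using t by simp
  then have "t * ?W \<in> step_profile k t ` {..<n} \<union> F"
    using report_or_F[OF step_profile_in_profiles] owa_step_profile[OF owa assms(1)] by metis
  then have "t * ?W \<in> {0, t}" using t(3) by (auto simp: step_profile_def)
  then show False using t W by auto
qed

lemma weight_0_or_1: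
  assumes "j < n"
  shows "w j \<in> {0, 1}"
proof -
  let ?W = "\<lambda>k. \<Sum>i\<in>{n-k..<n}. w i"
  have "n - (n - j) = j" "n - (n - Suc j) = Suc j" using assms(1) by auto
  then have "?W (n - j) = w j + ?W (n - Suc j)"
    using assms(1) by (simp add: sum.atLeast_Suc_lessThan)
  moreover have "?W (n - j) \<in> {0, 1}" "?W (n - Suc j) \<in> {0, 1}"
    using tail_weight_0_or_1 by auto
  moreover have "0 \<le> w j" using weights_01 assms(1) by auto
  ultimately show ?thesis by auto
qed

end

lemma owa_gmvs_imp_order_statistic_mechanism:
  assumes "1 \<le> n" "owa_mechanism n f" "gmvs n f"
  shows "order_statistic_mechanism n f"
proof -
  obtain w where w: "\<forall>j<n. w j \<in> {0..1}" "(\<Sum>j<n. w j) = 1"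
    and owa: "\<forall>x\<in>profiles n. f x = (\<Sum>j<n. w j * kth_smallest n x j)"
    using assms(2) unfolding owa_mechanism_def by blast
  obtain F where "finite F" "\<And>x. x \<in> profiles n \<Longrightarrow> f x \<in> x ` {..<n} \<union> F"
    using gmvs_value_report_or_parameter[OF assms(3,1)] by blast
  then have "\<forall>j<n. w j \<in> {0, 1}" using weight_0_or_1[OF w owa] by blast
  then obtain j where "j < n" "\<And>i. i < n \<Longrightarrow> w i = of_bool (i = j)"
    using unit_vector_of_01_weights w(2) by blast
  then have "\<forall>x\<in>profiles n. f x = kth_smallest n x j"
    using owa by simp
  then show ?thesis using \<open>j < n\<close> unfolding order_statistic_mechanism_def by blast
qed

theorem corollary1:
  fixes n :: nat and f :: "(nat \<Rightarrow> real) \<Rightarrow> real"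
  assumes "n \<ge> 1" and "mechanism n f"
  shows "order_statistic_mechanism n f \<longleftrightarrow> owa_mechanism n f \<and> gmvs n f"
  using assms(1) order_statistic_mechanism_imp_owa order_statistic_mechanism_imp_gmvs
    owa_gmvs_imp_order_statistic_mechanism by blast

end
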